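(* Let $\mathcal A\subseteq B(\mathcal H)$ be a unital w*-closed algebra and $\{\alpha_i\}_{i\in[d]}$ a uniformly bounded spatial action on $\mathcal A$. Then $(\mathcal A,\{\alpha_i\}_{i\in[d]})$ is a unital w*-dynamical system; that is, each $\alpha_i$ is a unital w*-continuous completely bounded endomorphism of $\mathcal A$ and $\sup_{\mu\in\mathbb F_+^d}\|\alpha_\mu\|<\infty$.
   Context: $d\in\{1,2,\dots\}\cup\{\infty\}$, $[d]=\{1,\dots,d\}$, $\mathbb F_+^d$ free semigroup on $[d]$, $\alpha_\mu=\alpha_{\mu_m}\cdots\alpha_{\mu_1}$ for $\mu=\mu_m\cdots\mu_1$. For $n\in\{1,2,\dots,\infty\}$ a row $u=[u_j]_{j\in[n]}\in B(\mathcal H\otimes\ell^2(n),\mathcal H)$ is invertible if there is a column $v=[v_j]^t\in B(\mathcal H,\mathcal H\otimes\ell^2(n))$ with $vu=I$ and $\sum_ju_jv_j=I_{\mathcal H}$. For invertible rows $u_i=[u_{i,j}]_{j\in[n_i]}$ with inverses $v_i$, set $\hat u_\mu=u_{\mu_m}(u_{\mu_{m-1}}\otimes I_{n_{\mu_m}})\cdots(u_{\mu_1}\otimes I_{n_{\mu_m}\cdots n_{\mu_2}})$ and $\hat v_\mu=(v_{\mu_1}\otimes I_{n_{\mu_m}\cdots n_{\mu_2}})\cdots(v_{\mu_{m-1}}\otimes I_{n_{\mu_m}})v_{\mu_m}$; $\{u_i\}$ is uniformly bounded if $\sup_\mu\max(\|\hat u_\mu\|,\|\hat v_\mu\|)<\infty$.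 A uniformly bounded spatial action on $\mathcal A$ is a family of maps $\alpha_i:\mathcal A\to\mathcal A$ with $\alpha_i(a)=\sum_{j\in[n_i]}u_{i,j}av_{i,j}$ for all $a\in\mathcal A$, where $\{u_i\}$ is uniformly bounded. *)

theory Defs
  imports "HOL-Analysis.Analysis"
begin

class complex_inner = real_normed_vector +
  fixes cscale :: "complex \<Rightarrow> 'a \<Rightarrow> 'a"
    and cinner :: "'a \<Rightarrow> 'a \<Rightarrow> complex"
  assumes cscale_add_right: "cscale c (x + y) = cscale c x + cscale c y"
    and cscale_add_left: "cscale (b + c) x = cscale b x + cscale c x"
    and cscale_mult: "cscale (b * c) x = cscale b (cscale c x)"
    and cscale_of_real: "cscale (complex_of_real r) x = scaleR r x"
    and cinner_conj_sym: "cinner x y = cnj (cinner y x)"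
    and cinner_add_right: "cinner x (y + z) = cinner x y + cinner x z"
    and cinner_cscale_right: "cinner x (cscale c y) = c * cinner x y"
    and cinner_self_nonneg: "0 \<le> Re (cinner x x)"
    and norm_eq_sqrt_cinner: "norm x = sqrt (Re (cinner x x))"

class chilbert_space = complex_inner + complete_space

definition bounded_clinear :: "('a::complex_inner \<Rightarrow> 'a) \<Rightarrow> bool" where
  "bounded_clinear T \<longleftrightarrow> bounded_linear T \<and> (\<forall>c x. T (cscale c x) = cscale c (T x))"

definition BH :: "('a::complex_inner \<Rightarrow> 'a) set" where
  "BH = {T. bounded_clinear T}"

text \<open>Unital (not necessarily self-adjoint) subalgebra of B(H).\<close>
definition unital_op_algebra :: "('a::complex_inner \<Rightarrow> 'a) set \<Rightarrow> bool" where
  "unital_op_algebra A \<longleftrightarrow> A \<subseteq> BH \<and> id \<in> A \<and>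
     (\<forall>a\<in>A. \<forall>b\<in>A. (\<lambda>x. a x + b x) \<in> A \<and> a \<circ> b \<in> A) \<and>
     (\<forall>c. \<forall>a\<in>A. (\<lambda>x. cscale c (a x)) \<in> A)"

definition normal_functionals :: "(('a::complex_inner \<Rightarrow> 'a) \<Rightarrow> complex) set" where
  "normal_functionals = {(\<lambda>T. \<Sum>k. cinner (y k) (T (x k))) | x y.
      summable (\<lambda>k. (norm (x k))\<^sup>2) \<and> summable (\<lambda>k. (norm (y k))\<^sup>2)}"

definition wstar_topology :: "('a::complex_inner \<Rightarrow> 'a) topology" where
  "wstar_topology = subtopology
     (topology_generated_by {{T. \<omega> T \<in> U} | \<omega> U. \<omega> \<in> normal_functionals \<and> open U}) BH"

definition wstar_closed :: "('a::complex_inner \<Rightarrow> 'a) set \<Rightarrow> bool" where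
  "wstar_closed A \<longleftrightarrow> closedin wstar_topology A"

text \<open>A row u = [u_j]_{j in J} is bounded by C as an operator H (x) l2(J) -> H
  (tested on finitely supported vectors).\<close>
definition row_bound :: "'b set \<Rightarrow> ('b \<Rightarrow> 'a::complex_inner \<Rightarrow> 'a) \<Rightarrow> real \<Rightarrow> bool" where
  "row_bound J u C \<longleftrightarrow> (\<forall>F \<xi>. finite F \<and> F \<subseteq> J \<longrightarrow>
     norm (\<Sum>j\<in>F. u j (\<xi> j)) \<le> C * sqrt (\<Sum>j\<in>F. (norm (\<xi> j))\<^sup>2))"

text \<open>A column v = [v_j]^t is bounded by C as an operator H -> H (x) l2(J).\<close>
definition col_bound :: "'b set \<Rightarrow> ('b \<Rightarrow> 'a::complex_inner \<Rightarrow> 'a) \<Rightarrow> real \<Rightarrow> bool" where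
  "col_bound J v C \<longleftrightarrow> (\<forall>x F. finite F \<and> F \<subseteq> J \<longrightarrow>
     sqrt (\<Sum>j\<in>F. (norm (v j x))\<^sup>2) \<le> C * norm x)"

definition invertible_row_with :: "'b set \<Rightarrow> ('b \<Rightarrow> 'a::complex_inner \<Rightarrow> 'a) \<Rightarrow> ('b \<Rightarrow> 'a \<Rightarrow> 'a) \<Rightarrow> bool" where
  "invertible_row_with J u v \<longleftrightarrow>
     (\<forall>j\<in>J. bounded_clinear (u j) \<and> bounded_clinear (v j)) \<and>
     (\<exists>C. row_bound J u C) \<and> (\<exists>C. col_bound J v C) \<and>
     (\<forall>j\<in>J. \<forall>k\<in>J. v k \<circ> u j = (if k = j then id else (\<lambda>_. 0))) \<and>
     (\<forall>x. ((\<lambda>j. u j (v j x)) has_sum x) J)"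

text \<open>[d] is rendered 0-based as {i. i < d} with d :: enat, d >= 1 (d = infinity allowed);
  n i :: enat is the length n_i of the i-th row, indexed 0-based by {j. j < n i}.\<close>
definition letters :: "enat \<Rightarrow> nat set" where
  "letters d = {i. enat i < d}"

definition row_idx :: "(nat \<Rightarrow> enat) \<Rightarrow> nat \<Rightarrow> nat set" where
  "row_idx n i = {j. enat j < n i}"

text \<open>Words mu = mu_m ... mu_1 are lists [mu_m, ..., mu_1]; the index set of the
  iterated row hat u_mu consists of lists [j_m, ..., j_1] with j_k < n_{mu_k}.\<close>
definition word_idx :: "(nat \<Rightarrow> enat) \<Rightarrow> nat list \<Rightarrow> nat list set" where
  "word_idx n \<mu> = {J. length J = length \<mu> \<and> (\<forall>k<length \<mu>. enat (J ! k) < n (\<mu> ! k))}"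

fun hat_u :: "(nat \<Rightarrow> nat \<Rightarrow> 'a \<Rightarrow> 'a) \<Rightarrow> nat list \<Rightarrow> nat list \<Rightarrow> 'a \<Rightarrow> 'a" where
  "hat_u u [] J = id"
| "hat_u u (i # \<mu>) J = u i (hd J) \<circ> hat_u u \<mu> (tl J)"

fun hat_v :: "(nat \<Rightarrow> nat \<Rightarrow> 'a \<Rightarrow> 'a) \<Rightarrow> nat list \<Rightarrow> nat list \<Rightarrow> 'a \<Rightarrow> 'a" where
  "hat_v v [] J = id"
| "hat_v v (i # \<mu>) J = hat_v v \<mu> (tl J) \<circ> v i (hd J)"

fun alpha_word :: "(nat \<Rightarrow> 'b \<Rightarrow> 'b) \<Rightarrow> nat list \<Rightarrow> 'b \<Rightarrow> 'b" where
  "alpha_word \<alpha> [] = id"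
| "alpha_word \<alpha> (i # \<mu>) = \<alpha> i \<circ> alpha_word \<alpha> \<mu>"

definition uniformly_bounded :: "enat \<Rightarrow> (nat \<Rightarrow> enat) \<Rightarrow> (nat \<Rightarrow> nat \<Rightarrow> 'a::complex_inner \<Rightarrow> 'a)
     \<Rightarrow> (nat \<Rightarrow> nat \<Rightarrow> 'a \<Rightarrow> 'a) \<Rightarrow> bool" where
  "uniformly_bounded d n u v \<longleftrightarrow>
     (\<forall>i\<in>letters d. n i \<ge> 1 \<and> invertible_row_with (row_idx n i) (u i) (v i)) \<and>
     (\<exists>C. \<forall>\<mu>. set \<mu> \<subseteq> letters d \<longrightarrow>
        row_bound (word_idx n \<mu>) (hat_u u \<mu>) C \<and> col_bound (word_idx n \<mu>) (hat_v v \<mu>) C)"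

definition ub_spatial_action :: "('a::complex_inner \<Rightarrow> 'a) set \<Rightarrow> enat \<Rightarrow> (nat \<Rightarrow> enat)
     \<Rightarrow> (nat \<Rightarrow> nat \<Rightarrow> 'a \<Rightarrow> 'a) \<Rightarrow> (nat \<Rightarrow> nat \<Rightarrow> 'a \<Rightarrow> 'a)
     \<Rightarrow> (nat \<Rightarrow> ('a \<Rightarrow> 'a) \<Rightarrow> ('a \<Rightarrow> 'a)) \<Rightarrow> bool" where
  "ub_spatial_action A d n u v \<alpha> \<longleftrightarrow>
     uniformly_bounded d n u v \<and>
     (\<forall>i\<in>letters d. \<alpha> i ` A \<subseteq> A \<and>
        (\<forall>a\<in>A. \<forall>x. ((\<lambda>j. u i j (a (v i j x))) has_sum \<alpha> i a x) (row_idx n i)))"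

definition mat_bound :: "nat \<Rightarrow> (nat \<Rightarrow> nat \<Rightarrow> 'a::real_normed_vector \<Rightarrow> 'a) \<Rightarrow> real \<Rightarrow> bool" where
  "mat_bound N a C \<longleftrightarrow> (\<forall>x. sqrt (\<Sum>i<N. (norm (\<Sum>j<N. a i j (x j)))\<^sup>2)
       \<le> C * sqrt (\<Sum>j<N. (norm (x j))\<^sup>2))"

definition completely_bounded_on :: "('a::complex_inner \<Rightarrow> 'a) set \<Rightarrow> (('a \<Rightarrow> 'a) \<Rightarrow> ('a \<Rightarrow> 'a)) \<Rightarrow> bool" where
  "completely_bounded_on A f \<longleftrightarrow> (\<exists>K. \<forall>N a C. (\<forall>i<N. \<forall>j<N. a i j \<in> A) \<longrightarrow>
      mat_bound N a C \<longrightarrow> mat_bound N (\<lambda>i j. f (a i j)) (K * C))"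

definition unital_endomorphism :: "('a::complex_inner \<Rightarrow> 'a) set \<Rightarrow> (('a \<Rightarrow> 'a) \<Rightarrow> ('a \<Rightarrow> 'a)) \<Rightarrow> bool" where
  "unital_endomorphism A f \<longleftrightarrow> f ` A \<subseteq> A \<and> f id = id \<and>
     (\<forall>a\<in>A. \<forall>b\<in>A. f (\<lambda>x. a x + b x) = (\<lambda>x. f a x + f b x) \<and> f (a \<circ> b) = f a \<circ> f b) \<and>
     (\<forall>c. \<forall>a\<in>A. f (\<lambda>x. cscale c (a x)) = (\<lambda>x. cscale c (f a x)))"

definition wstar_continuous_on :: "('a::complex_inner \<Rightarrow> 'a) set \<Rightarrow> (('a \<Rightarrow> 'a) \<Rightarrow> ('a \<Rightarrow> 'a)) \<Rightarrow> bool" where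
  "wstar_continuous_on A f \<longleftrightarrow>
     continuous_map (subtopology wstar_topology A) (subtopology wstar_topology A) f"

definition unital_wstar_dynamical_system :: "('a::complex_inner \<Rightarrow> 'a) set \<Rightarrow> enat
     \<Rightarrow> (nat \<Rightarrow> ('a \<Rightarrow> 'a) \<Rightarrow> ('a \<Rightarrow> 'a)) \<Rightarrow> bool" where
  "unital_wstar_dynamical_system A d \<alpha> \<longleftrightarrow>
     (\<forall>i\<in>letters d. unital_endomorphism A (\<alpha> i) \<and> wstar_continuous_on A (\<alpha> i)
        \<and> completely_bounded_on A (\<alpha> i)) \<and>
     (\<exists>K. \<forall>\<mu>. set \<mu> \<subseteq> letters d \<longrightarrow> (\<forall>a\<in>A. onorm (alpha_word \<alpha> \<mu> a) \<le> K * onorm a))"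

end

theory Submission
  imports Defs
begin

text \<open>
  Each \<open>\<alpha>\<^sub>i\<close> is the spatial map \<open>a \<mapsto> \<Sum>\<^sub>j u\<^sub>i\<^sub>j a v\<^sub>i\<^sub>j\<close>, a strongly convergent
  sandwich of \<open>a\<close> between the row \<open>u\<^sub>i\<close> and the column \<open>v\<^sub>i\<close>. Since \<open>v\<^sub>i\<^sub>k u\<^sub>i\<^sub>j = \<delta>\<^sub>k\<^sub>j\<close>,
  we get \<open>v\<^sub>i\<^sub>k \<alpha>\<^sub>i(b) = b v\<^sub>i\<^sub>k\<close>, which makes \<open>\<alpha>\<^sub>i\<close> multiplicative, and \<open>\<Sum>\<^sub>j u\<^sub>i\<^sub>j v\<^sub>i\<^sub>j = I\<close>
  makes it unital. Applied entrywise to a matrix, the sandwich factors through the amplified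
  row and column, which gives complete boundedness. A normal functional
  \<open>\<omega> = \<Sum>\<^sub>k \<langle>y\<^sub>k, - x\<^sub>k\<rangle>\<close> composed with \<open>\<alpha>\<^sub>i\<close> is again normal, namely the one given by
  the square-summable families \<open>v\<^sub>i\<^sub>j x\<^sub>k\<close> and \<open>u\<^sub>i\<^sub>j\<^sup>* y\<^sub>k\<close>; hence \<open>\<alpha>\<^sub>i\<close> is w*-continuous.
  Finally \<open>\<alpha>\<^sub>\<mu>\<close> is the spatial map of the iterated row \<open>hat_u u \<mu>\<close> with column
  \<open>hat_v v \<mu>\<close>, so the norm of \<open>\<alpha>\<^sub>\<mu>(a)\<close> is at most the product of their norms times the
  norm of \<open>a\<close>, which is bounded uniformly in \<open>\<mu>\<close>.
\<close>

section \<open>Complex inner product spaces and the Riesz representation\<close>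

lemma cinner_add_left: "cinner (x + y) z = cinner x z + cinner y z"
  by (metis cinner_conj_sym cinner_add_right complex_cnj_add)

lemma cinner_cscale_left: "cinner (cscale c x) y = cnj c * cinner x y"
  by (metis cinner_conj_sym cinner_cscale_right complex_cnj_mult)

lemma cinner_zero_right [simp]: "cinner x 0 = 0"
  using cinner_add_right[of x 0 0] by simp

lemma cinner_zero_left [simp]: "cinner 0 x = 0"
  using cinner_add_left[of 0 0 x] by simp

lemma cinner_diff_right: "cinner x (y - z) = cinner x y - cinner x z"
  by (metis add_diff_cancel cinner_add_right diff_add_cancel)

lemma cinner_diff_left: "cinner (x - y) z = cinner x z - cinner y z"
  by (metis add_diff_cancel cinner_add_left diff_add_cancel)

lemma cinner_sum_right: "cinner y (\<Sum>j\<in>F. f j) = (\<Sum>j\<in>F. cinner y (f j))"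
  by (induction F rule: infinite_finite_induct) (simp_all add: cinner_add_right)

lemma cinner_self: "cinner x x = complex_of_real ((norm x)\<^sup>2)"
proof -
  have "Im (cinner x x) = - Im (cinner x x)"
    by (metis cnj.sel(2) cinner_conj_sym)
  then have "Im (cinner x x) = 0"
    by simp
  then show ?thesis
    using norm_eq_sqrt_cinner[of x] cinner_self_nonneg[of x] by (simp add: complex_eq_iff)
qed

lemma cscale_scaleR_commute: "cscale c (r *\<^sub>R x) = r *\<^sub>R cscale c x"
  by (metis cscale_mult cscale_of_real mult.commute)

lemma Re_cinner_self: "Re (cinner x x) = (norm x)\<^sup>2"
  by (simp add: cinner_self)

lemma Re_cnj_mult_self_cinner: "Re (cnj t * t * cinner x x) = (cmod t)\<^sup>2 * (norm x)\<^sup>2"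
proof -
  have "cnj t * t = complex_of_real ((cmod t)\<^sup>2)"
    by (subst complex_norm_square) (rule mult.commute)
  then show ?thesis by (simp add: cinner_self)
qed

lemma norm_cscale: "norm (cscale c x) = cmod c * norm x"
proof -
  have "cinner (cscale c x) (cscale c x) = cnj c * c * cinner x x"
    by (simp add: cinner_cscale_left cinner_cscale_right mult.assoc)
  then have "(norm (cscale c x))\<^sup>2 = Re (cnj c * c * cinner x x)"
    by (simp only: Re_cinner_self [symmetric])
  then have "(norm (cscale c x))\<^sup>2 = (cmod c * norm x)\<^sup>2"
    by (simp only: Re_cnj_mult_self_cinner power_mult_distrib)
  then show ?thesis by (simp add: power2_eq_iff_nonneg)
qed

lemma bounded_linear_cscale: "bounded_linear (cscale c)"
  by (rule bounded_linear_intro[where K="cmod c"])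
    (simp_all add: cscale_add_right cscale_scaleR_commute norm_cscale mult.commute)

lemma norm_diff_cscale_square:
  "(norm (x - cscale t y))\<^sup>2 = (norm x)\<^sup>2 - 2 * Re (t * cinner x y) + (cmod t)\<^sup>2 * (norm y)\<^sup>2"
proof -
  have "cinner (x - cscale t y) (x - cscale t y)
      = cinner x x - t * cinner x y - cnj t * cinner y x + cnj t * t * cinner y y"
    by (simp add: cinner_diff_left cinner_diff_right cinner_cscale_left cinner_cscale_right algebra_simps)
  moreover have "Re (cnj t * cinner y x) = Re (t * cinner x y)"
    by (metis cinner_conj_sym complex_cnj_mult cnj.sel(1))
  ultimately show ?thesis
    by (simp only: Re_cinner_self [symmetric] minus_complex.sel plus_complex.sel
        Re_cnj_mult_self_cinner)
qed

lemma cinner_Cauchy_Schwarz: "cmod (cinner x y) \<le> norm x * norm y"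
proof (cases "y = 0")
  case False
  define c where "c = cinner x y"
  define t where "t = cnj c / complex_of_real ((norm y)\<^sup>2)"
  have ny: "norm y > 0" using False by simp
  have "t * c = complex_of_real ((cmod c)\<^sup>2 / (norm y)\<^sup>2)"
    by (simp add: t_def complex_norm_square mult.commute del: of_real_power)
  then have tc: "Re (t * c) = (cmod c)\<^sup>2 / (norm y)\<^sup>2"
    by simp
  have "cmod t = cmod c / (norm y)\<^sup>2"
    by (simp add: t_def norm_divide norm_power)
  then have tt: "(cmod t)\<^sup>2 * (norm y)\<^sup>2 = (cmod c)\<^sup>2 / (norm y)\<^sup>2"
    using ny by (simp add: power_divide field_simps power2_eq_square)
  have "(norm (x - cscale t y))\<^sup>2 = (norm x)\<^sup>2 - 2 * Re (t * c) + (cmod t)\<^sup>2 * (norm y)\<^sup>2"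
    unfolding c_def by (rule norm_diff_cscale_square)
  then have "(norm (x - cscale t y))\<^sup>2 = (norm x)\<^sup>2 - (cmod c)\<^sup>2 / (norm y)\<^sup>2"
    using tc tt by linarith
  then have "0 \<le> (norm x)\<^sup>2 - (cmod c)\<^sup>2 / (norm y)\<^sup>2"
    by (metis zero_le_power2)
  then have "(cmod c)\<^sup>2 \<le> (norm x * norm y)\<^sup>2"
    using ny by (simp add: field_simps power_mult_distrib)
  then show ?thesis
    unfolding c_def by (meson norm_ge_zero power2_le_imp_le zero_le_mult_iff)
qed simp

lemma bounded_linear_cinner_right: "bounded_linear (cinner y)"
proof (rule bounded_linear_intro[where K="norm y"])
  show "cinner y (r *\<^sub>R a) = r *\<^sub>R cinner y a" for r a
    by (simp add: scaleR_conv_of_real flip: cscale_of_real cinner_cscale_right)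
  show "norm (cinner y x) \<le> norm x * norm y" for x
    using cinner_Cauchy_Schwarz[of y x] by (simp add: mult.commute)
qed (rule cinner_add_right)

lemma parallelogram_law:
  fixes p q :: "'a::complex_inner"
  shows "(norm (p - q))\<^sup>2 + (norm (p + q))\<^sup>2 = 2 * (norm p)\<^sup>2 + 2 * (norm q)\<^sup>2"
proof -
  have "cinner (p - q) (p - q) + cinner (p + q) (p + q) = 2 * cinner p p + 2 * cinner q q"
    by (simp add: cinner_diff_left cinner_diff_right cinner_add_left cinner_add_right)
  then have "Re (cinner (p - q) (p - q) + cinner (p + q) (p + q)) = Re (2 * cinner p p + 2 * cinner q q)"
    by simp
  then show ?thesis by (simp add: Re_cinner_self)
qed

lemma cinner_eq_0_if_norm_minimal:
  assumes minimal: "\<And>t. norm z \<le> norm (z - cscale t m)"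
  shows "cinner z m = 0"
proof -
  define q where "q = (cmod (cinner z m))\<^sup>2"
  define r where "r = 1 / ((norm m)\<^sup>2 + 1)"
  have "0 < (norm m)\<^sup>2 + 1"
    by (metis add_nonneg_pos zero_le_power2 zero_less_one)
  then have r: "r > 0" "r * (norm m)\<^sup>2 < 1"
    by (simp_all add: r_def divide_less_eq)
  define t where "t = complex_of_real r * cnj (cinner z m)"
  have "t * cinner z m = complex_of_real (r * q)"
    unfolding t_def q_def by (metis complex_norm_square mult.assoc mult.commute of_real_mult)
  then have "Re (t * cinner z m) = r * q"
    by simp
  moreover have "(cmod t)\<^sup>2 = r\<^sup>2 * q"
    using r by (simp add: t_def q_def norm_mult power_mult_distrib)
  moreover have "(norm z)\<^sup>2 \<le> (norm (z - cscale t m))\<^sup>2"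
    using minimal[of t] by (simp add: power_mono)
  ultimately have "0 \<le> r * q * (r * (norm m)\<^sup>2 - 2)"
    unfolding norm_diff_cscale_square by (simp add: algebra_simps power2_eq_square)
  then have "q \<le> 0"
    using r by (simp add: mult_le_0_iff zero_le_mult_iff)
  then show ?thesis by (simp add: q_def)
qed

lemma Cauchy_if_dist_bounded:
  fixes s :: "nat \<Rightarrow> 'a::metric_space"
  assumes "\<And>N m n. N \<le> m \<Longrightarrow> N \<le> n \<Longrightarrow> dist (s m) (s n) \<le> b N" and "b \<longlonglongrightarrow> 0"
  shows "Cauchy s"
proof (rule metric_CauchyI)
  fix e :: real assume "e > 0"
  then obtain N where "b N < e"
    using order_tendstoD(2)[OF \<open>b \<longlonglongrightarrow> 0\<close>] by (auto simp: eventually_sequentially)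
  then show "\<exists>N. \<forall>m\<ge>N. \<forall>n\<ge>N. dist (s m) (s n) < e"
    using assms(1) by (meson order_le_less_trans)
qed

lemma midpoint_norm_estimate:
  fixes p q :: "'a::complex_inner"
  assumes "2 * \<delta> \<le> norm (p + q)" "0 \<le> \<delta>" "0 \<le> e"
    and "norm p \<le> \<delta> + e" "norm q \<le> \<delta> + e"
  shows "(norm (p - q))\<^sup>2 \<le> 4 * e * (2 * \<delta> + e)"
proof -
  have "(2 * \<delta>)\<^sup>2 \<le> (norm (p + q))\<^sup>2" "(norm p)\<^sup>2 \<le> (\<delta> + e)\<^sup>2" "(norm q)\<^sup>2 \<le> (\<delta> + e)\<^sup>2"
    using assms by (intro power_mono; simp)+
  then show ?thesis
    using parallelogram_law[of p q] by (simp add: power2_eq_square algebra_simps)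
qed

lemma exists_min_norm:
  fixes S :: "'a::chilbert_space set"
  assumes "closed S" "S \<noteq> {}" and midpoint: "\<And>p q. p \<in> S \<Longrightarrow> q \<in> S \<Longrightarrow> (1/2) *\<^sub>R (p + q) \<in> S"
  shows "\<exists>z\<in>S. \<forall>x\<in>S. norm z \<le> norm x"
proof -
  define \<delta> where "\<delta> = Inf (norm ` S)"
  have \<delta>_le: "\<delta> \<le> norm x" if "x \<in> S" for x
    unfolding \<delta>_def using that by (intro cInf_lower bdd_belowI[of _ 0]) auto
  have "\<delta> \<ge> 0"
    unfolding \<delta>_def using \<open>S \<noteq> {}\<close> by (intro cInf_greatest) auto
  have "\<exists>x\<in>S. norm x < \<delta> + 1 / (real N + 1)" for N
    using cInf_lessD[of "norm ` S" "\<delta> + 1 / (real N + 1)"] \<open>S \<noteq> {}\<close> by (auto simp: \<delta>_def)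
  then obtain s where s: "\<And>N. s N \<in> S" "\<And>N. norm (s N) < \<delta> + 1 / (real N + 1)"
    by metis
  have "Cauchy s"
  proof (rule Cauchy_if_dist_bounded)
    fix N m n :: nat assume "N \<le> m" "N \<le> n"
    define e where "e = 1 / (real N + 1)"
    have "norm (s k) \<le> \<delta> + e" if "N \<le> k" for k
    proof -
      have "1 / (real k + 1) \<le> e"
        unfolding e_def using that by (intro divide_left_mono) auto
      then show ?thesis using s(2)[of k] by linarith
    qed
    moreover have "2 * \<delta> \<le> norm (s m + s n)"
      using \<delta>_le[OF midpoint[OF s(1)[of m] s(1)[of n]]] by simp
    ultimately have "(dist (s m) (s n))\<^sup>2 \<le> 4 * e * (2 * \<delta> + e)"
      unfolding dist_norm using \<open>N \<le> m\<close> \<open>N \<le> n\<close> \<open>\<delta> \<ge> 0\<close>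
      by (intro midpoint_norm_estimate) (auto simp: e_def)
    then show "dist (s m) (s n) \<le> sqrt (4 * e * (2 * \<delta> + e))"
      by (simp add: real_le_rsqrt)
  next
    have "(\<lambda>N. 1 / (real N + 1)) \<longlonglongrightarrow> 0"
      using LIMSEQ_inverse_real_of_nat by (simp add: inverse_eq_divide add.commute)
    then have "(\<lambda>N. sqrt (4 * (1 / (real N + 1)) * (2 * \<delta> + 1 / (real N + 1))))
        \<longlonglongrightarrow> sqrt (4 * 0 * (2 * \<delta> + 0))"
      by (intro tendsto_intros)
    then show "(\<lambda>N. sqrt (4 * (1 / (real N + 1)) * (2 * \<delta> + 1 / (real N + 1)))) \<longlonglongrightarrow> 0"
      by simp
  qed
  then obtain z where z: "s \<longlonglongrightarrow> z"
    using Cauchy_convergent_iff convergent_def by blast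
  have "z \<in> S"
    using \<open>closed S\<close> s(1) z closed_sequentially by blast
  moreover have "norm z \<le> \<delta>"
  proof (rule LIMSEQ_le[OF tendsto_norm[OF z]])
    show "(\<lambda>N. \<delta> + 1 / (real N + 1)) \<longlonglongrightarrow> \<delta>"
      using LIMSEQ_inverse_real_of_nat_add[of \<delta>] by (simp add: inverse_eq_divide add.commute)
  qed (use s(2) less_imp_le in auto)
  ultimately show ?thesis
    using \<delta>_le by force
qed

text \<open>The vector of minimal norm on the hyperplane \<open>f = 1\<close> is orthogonal to the kernel of \<open>f\<close>.\<close>

lemma riesz_representation:
  fixes f :: "'a::chilbert_space \<Rightarrow> complex"
  assumes f: "bounded_linear f" and f_cscale: "\<And>c x. f (cscale c x) = c * f x"
  shows "\<exists>w. \<forall>x. f x = cinner w x"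
proof (cases "\<forall>x. f x = 0")
  case False
  then obtain x0 where "f x0 \<noteq> 0" by blast
  note f_diff = linear_diff[OF bounded_linear.linear[OF f]]
  define S where "S = f -` {1}"
  have "\<exists>z\<in>S. \<forall>x\<in>S. norm z \<le> norm x"
  proof (rule exists_min_norm)
    show "closed S"
      unfolding S_def by (intro continuous_closed_vimage linear_continuous_at f closed_singleton)
    show "S \<noteq> {}"
      using \<open>f x0 \<noteq> 0\<close> f_cscale[of "1 / f x0" x0] by (auto simp: S_def)
    show "(1/2) *\<^sub>R (p + q) \<in> S" if "p \<in> S" "q \<in> S" for p q
      using that by (simp add: S_def linear_add linear_scale bounded_linear.linear[OF f] scaleR_conv_of_real)
  qed
  then obtain z where "f z = 1" and z_min: "\<And>x. f x = 1 \<Longrightarrow> norm z \<le> norm x"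
    unfolding S_def by blast
  have z_orth: "cinner z m = 0" if "f m = 0" for m
    by (rule cinner_eq_0_if_norm_minimal)
      (simp add: z_min f_diff f_cscale \<open>f z = 1\<close> that)
  have "z \<noteq> 0"
    using \<open>f z = 1\<close> linear_0[OF bounded_linear.linear[OF f]] by auto
  show ?thesis
  proof (intro exI allI)
    fix x
    have "cinner z (x - cscale (f x) z) = 0"
      by (rule z_orth) (simp add: f_diff f_cscale \<open>f z = 1\<close>)
    then show "f x = cinner (cscale (complex_of_real (1 / (norm z)\<^sup>2)) z) x"
      using \<open>z \<noteq> 0\<close> by (simp add: cinner_diff_right cinner_cscale_right cinner_cscale_left cinner_self)
  qed
qed (metis cinner_zero_left)

lemma bounded_clinear_adjoint_exists:
  fixes u :: "'a::chilbert_space \<Rightarrow> 'a"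
  assumes "bounded_clinear u"
  shows "\<exists>u'. \<forall>y z. cinner y (u z) = cinner (u' y) z"
proof -
  have "\<exists>w. \<forall>z. cinner y (u z) = cinner w z" for y
  proof (rule riesz_representation[where f="\<lambda>z. cinner y (u z)"])
    show "bounded_linear (\<lambda>z. cinner y (u z))"
      using assms unfolding bounded_clinear_def
      by (blast intro: bounded_linear_compose[OF bounded_linear_cinner_right])
    show "cinner y (u (cscale c z)) = c * cinner y (u z)" for c z
      using assms by (simp add: bounded_clinear_def cinner_cscale_right)
  qed
  then show ?thesis by metis
qed

section \<open>Unconditional sums, rows and columns\<close>

subclass (in chilbert_space) banach ..

lemma has_sum_norm_le:
  assumes "(f has_sum a) A" "\<And>F. finite F \<Longrightarrow> F \<subseteq> A \<Longrightarrow> norm (sum f F) \<le> b"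
  shows "norm a \<le> b"
proof -
  have "((\<lambda>F. norm (sum f F)) \<longlongrightarrow> norm a) (finite_subsets_at_top A)"
    using assms(1) unfolding has_sum_def by (rule tendsto_norm)
  moreover have "eventually (\<lambda>F. norm (sum f F) \<le> b) (finite_subsets_at_top A)"
    by (rule eventually_finite_subsets_at_top_weakI) (rule assms(2))
  ultimately show ?thesis
    using finite_subsets_at_top_neq_bot by (rule tendsto_upperbound)
qed

lemma summable_on_if_small_tails:
  fixes f :: "'b \<Rightarrow> 'a::banach"
  assumes tails: "\<And>e. e > 0 \<Longrightarrow> \<exists>F0. finite F0 \<and> F0 \<subseteq> A \<and>
      (\<forall>G. finite G \<and> G \<subseteq> A - F0 \<longrightarrow> norm (sum f G) < e)"
  shows "f summable_on A"
proof -
  have "\<exists>P. eventually P (finite_subsets_at_top A) \<and>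
      (\<forall>F F'. P F \<and> P F' \<longrightarrow> dist (sum f F) (sum f F') < e)" if "e > 0" for e
  proof -
    obtain F0 where F0: "finite F0" "F0 \<subseteq> A"
      and small: "\<And>G. finite G \<Longrightarrow> G \<subseteq> A - F0 \<Longrightarrow> norm (sum f G) < e / 2"
      using tails[of "e/2"] \<open>e > 0\<close> by auto
    define P where "P F \<longleftrightarrow> finite F \<and> F0 \<subseteq> F \<and> F \<subseteq> A" for F
    have "sum f F = sum f F0 + sum f (F - F0)" if "P F" for F
      using that unfolding P_def by (metis add.commute sum.subset_diff)
    then have dist_le: "dist (sum f F) (sum f F') \<le> norm (sum f (F - F0)) + norm (sum f (F' - F0))"
      if "P F" "P F'" for F F'
      using that unfolding dist_norm by (simp add: norm_triangle_ineq4)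
    have tail_small: "norm (sum f (F - F0)) < e / 2" if "P F" for F
      using that unfolding P_def by (intro small) auto
    have "dist (sum f F) (sum f F') < e" if "P F" "P F'" for F F'
      using dist_le[OF that] tail_small[OF that(1)] tail_small[OF that(2)] by linarith
    moreover have "eventually P (finite_subsets_at_top A)"
      unfolding eventually_finite_subsets_at_top P_def using F0 by blast
    ultimately show ?thesis
      by blast
  qed
  then have "cauchy_filter (filtermap (sum f) (finite_subsets_at_top A))"
    by (simp add: cauchy_filter_metric_filtermap)
  then obtain L where "(sum f \<longlongrightarrow> L) (finite_subsets_at_top A)"
    using complete_uniform[where S=UNIV] complete_UNIV by (force simp add: filterlim_def)
  then show ?thesis
    using summable_on_def has_sum_def by blast
qed

lemma has_sum_sum:
  fixes f :: "'i \<Rightarrow> 'b \<Rightarrow> 'c::topological_comm_monoid_add"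
  assumes "finite I" "\<And>i. i \<in> I \<Longrightarrow> (f i has_sum s i) A"
  shows "((\<lambda>x. \<Sum>i\<in>I. f i x) has_sum (\<Sum>i\<in>I. s i)) A"
  using assms by (induction I rule: finite_induct) (auto intro!: has_sum_add)

lemma has_sum_single_support:
  assumes "k \<in> A" "\<And>j. j \<in> A \<Longrightarrow> j \<noteq> k \<Longrightarrow> f j = 0"
  shows "(f has_sum f k) A"
  using has_sum_cong_neutral[of A "{k}" f f] has_sum_finite[of "{k}" f] assms by auto

lemma has_sum_prod_decode_sums:
  assumes "(h has_sum H) UNIV"
  shows "(h \<circ> prod_decode) sums H"
proof -
  have "((h \<circ> prod_decode) has_sum H) UNIV"
    using assms has_sum_reindex[of prod_decode UNIV h H] bij_prod_decode by (simp add: bij_def)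
  then show ?thesis by (rule has_sum_imp_sums)
qed

lemma bounded_clinear_linear: "bounded_clinear f \<Longrightarrow> linear f"
  by (simp add: bounded_clinear_def bounded_linear.linear)

lemma row_bound_mono: "row_bound J u C \<Longrightarrow> C \<le> C' \<Longrightarrow> row_bound J u C'"
  unfolding row_bound_def by (meson mult_right_mono order_trans real_sqrt_ge_zero sum_nonneg zero_le_power2)

lemma col_bound_mono: "col_bound J v C \<Longrightarrow> C \<le> C' \<Longrightarrow> col_bound J v C'"
  unfolding col_bound_def by (meson mult_right_mono order_trans norm_ge_zero)

lemma invertible_row_withD:
  assumes "invertible_row_with J u v"
  shows "j \<in> J \<Longrightarrow> bounded_clinear (u j)"
    and "j \<in> J \<Longrightarrow> bounded_clinear (v j)"
    and "j \<in> J \<Longrightarrow> k \<in> J \<Longrightarrow> v k (u j y) = (if k = j then y else 0)"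
    and "((\<lambda>j. u j (v j x)) has_sum x) J"
proof -
  show "j \<in> J \<Longrightarrow> k \<in> J \<Longrightarrow> v k (u j y) = (if k = j then y else 0)"
    using assms unfolding invertible_row_with_def by (metis comp_apply id_apply)
qed (use assms in \<open>simp_all add: invertible_row_with_def\<close>)

lemma invertible_row_with_bound:
  assumes "invertible_row_with J u v"
  obtains C where "C \<ge> 0" "row_bound J u C" "col_bound J v C"
proof -
  obtain Cu Cv where "row_bound J u Cu" "col_bound J v Cv"
    using assms by (auto simp: invertible_row_with_def)
  then show ?thesis
    by (meson that[of "max 0 (max Cu Cv)"] row_bound_mono col_bound_mono max.cobounded1 max.cobounded2 order_trans)
qed

lemma col_bound_square_summable:
  assumes "col_bound J v C"
  shows "(\<lambda>j. (norm (v j x))\<^sup>2) summable_on J"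
    and "(\<Sum>\<^sub>\<infinity>j\<in>J. (norm (v j x))\<^sup>2) \<le> (C * norm x)\<^sup>2"
proof -
  have "(\<Sum>j\<in>F. (norm (v j x))\<^sup>2) \<le> (C * norm x)\<^sup>2" if "finite F" "F \<subseteq> J" for F
  proof -
    have "sqrt (\<Sum>j\<in>F. (norm (v j x))\<^sup>2) \<le> C * norm x"
      using assms that unfolding col_bound_def by blast
    then have "(sqrt (\<Sum>j\<in>F. (norm (v j x))\<^sup>2))\<^sup>2 \<le> (C * norm x)\<^sup>2"
      by (rule power_mono) (simp_all add: sum_nonneg)
    moreover have "0 \<le> (\<Sum>j\<in>F. (norm (v j x))\<^sup>2)"
      by (simp add: sum_nonneg)
    ultimately show ?thesis
      by simp
  qed
  moreover from this show summable: "(\<lambda>j. (norm (v j x))\<^sup>2) summable_on J"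
    by (intro nonneg_bdd_above_summable_on bdd_aboveI[where M="(C * norm x)\<^sup>2"]) auto
  ultimately show "(\<Sum>\<^sub>\<infinity>j\<in>J. (norm (v j x))\<^sup>2) \<le> (C * norm x)\<^sup>2"
    by (intro infsum_le_finite_sums[OF summable])
qed

lemma nonneg_summable_on_small_tails:
  fixes f :: "'b \<Rightarrow> real"
  assumes "f summable_on J" "\<And>j. j \<in> J \<Longrightarrow> f j \<ge> 0" "\<epsilon> > 0"
  shows "\<exists>F0. finite F0 \<and> F0 \<subseteq> J \<and> (\<forall>G. finite G \<and> G \<subseteq> J - F0 \<longrightarrow> sum f G \<le> \<epsilon>)"
proof -
  obtain F0 where F0: "finite F0" "F0 \<subseteq> J" and "dist (sum f F0) (infsum f J) \<le> \<epsilon>"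
    using infsum_finite_approximation[OF assms(1,3)] by blast
  then have tail: "infsum f J - sum f F0 \<le> \<epsilon>"
    unfolding dist_real_def by linarith
  have F0_G: "sum f F0 + sum f G \<le> infsum f J" if "finite G" "G \<subseteq> J - F0" for G
  proof -
    have "sum f (F0 \<union> G) = sum f F0 + sum f G"
      using that F0 by (intro sum.union_disjoint) auto
    moreover have "sum f (F0 \<union> G) \<le> infsum f J"
      using that F0 assms(2) by (intro finite_sum_le_infsum assms(1)) auto
    ultimately show ?thesis
      by simp
  qed
  have "sum f G \<le> \<epsilon>" if "finite G" "G \<subseteq> J - F0" for G
    using tail F0_G[OF that] by linarith
  then show ?thesis
    using F0 by blast
qed

lemma row_bound_summable:
  fixes u :: "'b \<Rightarrow> 'a::chilbert_space \<Rightarrow> 'a"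
  assumes row: "row_bound J u C" and "C \<ge> 0"
    and square_summable: "(\<lambda>j. (norm (\<xi> j))\<^sup>2) summable_on J"
  shows "(\<lambda>j. u j (\<xi> j)) summable_on J"
    and "norm (\<Sum>\<^sub>\<infinity>j\<in>J. u j (\<xi> j)) \<le> C * sqrt (\<Sum>\<^sub>\<infinity>j\<in>J. (norm (\<xi> j))\<^sup>2)"
proof -
  define S where "S = (\<Sum>\<^sub>\<infinity>j\<in>J. (norm (\<xi> j))\<^sup>2)"
  have finite_le_S: "(\<Sum>j\<in>F. (norm (\<xi> j))\<^sup>2) \<le> S" if "finite F" "F \<subseteq> J" for F
    unfolding S_def by (rule finite_sum_le_infsum[OF square_summable that]) auto
  have row_F: "norm (\<Sum>j\<in>F. u j (\<xi> j)) \<le> C * sqrt (\<Sum>j\<in>F. (norm (\<xi> j))\<^sup>2)"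
    if "finite F" "F \<subseteq> J" for F
    using row that unfolding row_bound_def by blast
  show summable: "(\<lambda>j. u j (\<xi> j)) summable_on J"
  proof (rule summable_on_if_small_tails)
    fix e :: real assume "e > 0"
    then have "(e / (C + 1))\<^sup>2 > 0"
      using \<open>C \<ge> 0\<close> by simp
    from nonneg_summable_on_small_tails[OF square_summable _ this]
    obtain F0 where F0: "finite F0" "F0 \<subseteq> J"
      and tail: "\<And>G. finite G \<Longrightarrow> G \<subseteq> J - F0 \<Longrightarrow> (\<Sum>j\<in>G. (norm (\<xi> j))\<^sup>2) \<le> (e / (C + 1))\<^sup>2"
      by auto
    have "norm (\<Sum>j\<in>G. u j (\<xi> j)) < e" if "finite G" "G \<subseteq> J - F0" for G
    proof -
      have "norm (\<Sum>j\<in>G. u j (\<xi> j)) \<le> C * sqrt (\<Sum>j\<in>G. (norm (\<xi> j))\<^sup>2)"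
        using that by (intro row_F) auto
      also have "\<dots> \<le> C * (e / (C + 1))"
        using tail[OF that] \<open>C \<ge> 0\<close> \<open>e > 0\<close> by (intro mult_left_mono real_le_lsqrt) auto
      also have "\<dots> < e"
        using \<open>e > 0\<close> \<open>C \<ge> 0\<close> by (simp add: field_simps)
      finally show ?thesis .
    qed
    then show "\<exists>F0. finite F0 \<and> F0 \<subseteq> J \<and> (\<forall>G. finite G \<and> G \<subseteq> J - F0 \<longrightarrow> norm (\<Sum>j\<in>G. u j (\<xi> j)) < e)"
      using F0 by blast
  qed
  show "norm (\<Sum>\<^sub>\<infinity>j\<in>J. u j (\<xi> j)) \<le> C * sqrt S"
  proof (rule has_sum_norm_le[OF has_sum_infsum[OF summable]])
    fix F assume F: "finite F" "F \<subseteq> J"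
    have "C * sqrt (\<Sum>j\<in>F. (norm (\<xi> j))\<^sup>2) \<le> C * sqrt S"
      using finite_le_S[OF F] \<open>C \<ge> 0\<close> by (simp add: mult_left_mono)
    then show "norm (\<Sum>j\<in>F. u j (\<xi> j)) \<le> C * sqrt S"
      using row_F[OF F] by linarith
  qed
qed

lemma row_col_composition_bound:
  fixes u :: "'b \<Rightarrow> 'a::chilbert_space \<Rightarrow> 'a"
  assumes "row_bound J u Cu" "Cu \<ge> 0" "col_bound J v Cv" "bounded_linear a"
  shows "(\<lambda>j. u j (a (v j x))) summable_on J"
    and "norm (\<Sum>\<^sub>\<infinity>j\<in>J. u j (a (v j x))) \<le> Cu * Cv * onorm a * norm x"
proof -
  let ?B = "onorm a"
  have "?B \<ge> 0" by (rule onorm_pos_le[OF \<open>bounded_linear a\<close>])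
  have a_le: "(norm (a (v j x)))\<^sup>2 \<le> ?B\<^sup>2 * (norm (v j x))\<^sup>2" for j
    using power_mono[OF onorm[OF \<open>bounded_linear a\<close>, of "v j x"] norm_ge_zero]
    by (simp add: power_mult_distrib)
  have v_summable: "(\<lambda>j. ?B\<^sup>2 * (norm (v j x))\<^sup>2) summable_on J"
    by (intro summable_on_cmult_right col_bound_square_summable(1)[OF assms(3)])
  have av_summable: "(\<lambda>j. (norm (a (v j x)))\<^sup>2) summable_on J"
    by (rule summable_on_comparison_test[OF v_summable]) (simp_all add: a_le)
  then show "(\<lambda>j. u j (a (v j x))) summable_on J"
    by (rule row_bound_summable[OF assms(1,2)])
  have "(\<Sum>\<^sub>\<infinity>j\<in>J. (norm (a (v j x)))\<^sup>2) \<le> ?B\<^sup>2 * (\<Sum>\<^sub>\<infinity>j\<in>J. (norm (v j x))\<^sup>2)"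
    using infsum_mono[OF av_summable v_summable a_le] by (simp add: infsum_cmult_right')
  also have "\<dots> \<le> ?B\<^sup>2 * (Cv * norm x)\<^sup>2"
    by (intro mult_left_mono col_bound_square_summable(2)[OF assms(3)]) simp
  also have "\<dots> = (Cv * ?B * norm x)\<^sup>2"
    by (simp add: power_mult_distrib)
  finally have "sqrt (\<Sum>\<^sub>\<infinity>j\<in>J. (norm (a (v j x)))\<^sup>2) \<le> sqrt ((Cv * ?B * norm x)\<^sup>2)"
    by (rule real_sqrt_le_mono)
  moreover have "sqrt (\<Sum>j\<in>{}. (norm (v j x))\<^sup>2) \<le> Cv * norm x"
    using assms(3) unfolding col_bound_def by blast
  then have "Cv * norm x \<ge> 0"
    by simp
  then have "Cv * ?B * norm x \<ge> 0"
    using \<open>?B \<ge> 0\<close> by (metis mult.commute mult.left_commute mult_nonneg_nonneg)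
  ultimately have "sqrt (\<Sum>\<^sub>\<infinity>j\<in>J. (norm (a (v j x)))\<^sup>2) \<le> Cv * ?B * norm x"
    by (simp only: real_sqrt_abs abs_of_nonneg)
  then have "Cu * sqrt (\<Sum>\<^sub>\<infinity>j\<in>J. (norm (a (v j x)))\<^sup>2) \<le> Cu * Cv * ?B * norm x"
    using \<open>Cu \<ge> 0\<close> by (simp add: mult_left_mono mult.assoc)
  then show "norm (\<Sum>\<^sub>\<infinity>j\<in>J. u j (a (v j x))) \<le> Cu * Cv * ?B * norm x"
    using row_bound_summable(2)[OF assms(1,2) av_summable] by linarith
qed

section \<open>Spatial maps\<close>

definition spatial_on :: "('a::complex_inner \<Rightarrow> 'a) set \<Rightarrow> 'b set \<Rightarrow> ('b \<Rightarrow> 'a \<Rightarrow> 'a)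
    \<Rightarrow> ('b \<Rightarrow> 'a \<Rightarrow> 'a) \<Rightarrow> (('a \<Rightarrow> 'a) \<Rightarrow> ('a \<Rightarrow> 'a)) \<Rightarrow> bool" where
  "spatial_on A J u v \<beta> \<longleftrightarrow> (\<forall>a\<in>A. \<forall>x. ((\<lambda>j. u j (a (v j x))) has_sum \<beta> a x) J)"

lemma spatial_onD: "spatial_on A J u v \<beta> \<Longrightarrow> a \<in> A \<Longrightarrow> ((\<lambda>j. u j (a (v j x))) has_sum \<beta> a x) J"
  by (simp add: spatial_on_def)

lemma spatial_on_col_intertwines:
  assumes "invertible_row_with J u v" "spatial_on A J u v \<beta>" "b \<in> A" "k \<in> J"
  shows "v k (\<beta> b x) = b (v k x)"
proof -
  note row = invertible_row_withD[OF assms(1)]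
  have "bounded_linear (v k)"
    using row(2)[OF \<open>k \<in> J\<close>] by (simp add: bounded_clinear_def)
  from has_sum_bounded_linear[OF this spatial_onD[OF assms(2,3)]]
  have "((\<lambda>j. v k (u j (b (v j x)))) has_sum v k (\<beta> b x)) J" .
  moreover have "((\<lambda>j. v k (u j (b (v j x)))) has_sum b (v k x)) J"
    using has_sum_single_support[of k J "\<lambda>j. v k (u j (b (v j x)))"] \<open>k \<in> J\<close> by (simp add: row(3))
  ultimately show ?thesis
    by (rule has_sum_unique)
qed

lemma spatial_on_unital_endomorphism:
  assumes "unital_op_algebra A" "invertible_row_with J u v" "\<beta> ` A \<subseteq> A" "spatial_on A J u v \<beta>"
  shows "unital_endomorphism A \<beta>"
proof -
  note row = invertible_row_withD[OF assms(2)]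
  have u: "\<And>j. j \<in> J \<Longrightarrow> linear (u j)"
    and u_cscale: "\<And>j c x. j \<in> J \<Longrightarrow> u j (cscale c x) = cscale c (u j x)"
    using row(1) by (simp_all add: bounded_clinear_def bounded_linear.linear)
  have closed: "id \<in> A" "\<And>a b. a \<in> A \<Longrightarrow> b \<in> A \<Longrightarrow> (\<lambda>x. a x + b x) \<in> A"
      "\<And>a b. a \<in> A \<Longrightarrow> b \<in> A \<Longrightarrow> a \<circ> b \<in> A" "\<And>c a. a \<in> A \<Longrightarrow> (\<lambda>x. cscale c (a x)) \<in> A"
    using assms(1) by (auto simp: unital_op_algebra_def)
  note spatial = spatial_onD[OF assms(4)]
  have "\<beta> id = id"
  proof
    fix x
    have "((\<lambda>j. u j (id (v j x))) has_sum x) J"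
      using row(4)[of x] by simp
    then show "\<beta> id x = id x"
      using has_sum_unique[OF spatial[OF closed(1)]] by (metis id_apply)
  qed
  moreover have "\<beta> (\<lambda>x. a x + b x) = (\<lambda>x. \<beta> a x + \<beta> b x)" if "a \<in> A" "b \<in> A" for a b
  proof
    fix x
    have "((\<lambda>j. u j (a (v j x) + b (v j x))) has_sum (\<beta> a x + \<beta> b x)) J"
      using has_sum_add[OF spatial[OF that(1)] spatial[OF that(2)]]
      by (simp add: u linear_add cong: has_sum_cong)
    then show "\<beta> (\<lambda>x. a x + b x) x = \<beta> a x + \<beta> b x"
      by (rule has_sum_unique[OF spatial[OF closed(2)[OF that]]])
  qed
  moreover have "\<beta> (\<lambda>x. cscale c (a x)) = (\<lambda>x. cscale c (\<beta> a x))" if "a \<in> A" for a c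
  proof
    fix x
    have "((\<lambda>j. u j (cscale c (a (v j x)))) has_sum cscale c (\<beta> a x)) J"
      using has_sum_bounded_linear[OF bounded_linear_cscale spatial[OF that]]
      by (simp add: u_cscale cong: has_sum_cong)
    then show "\<beta> (\<lambda>x. cscale c (a x)) x = cscale c (\<beta> a x)"
      by (rule has_sum_unique[OF spatial[OF closed(4)[OF that]]])
  qed
  moreover have "\<beta> (a \<circ> b) = \<beta> a \<circ> \<beta> b" if "a \<in> A" "b \<in> A" for a b
  proof
    fix x
    have v_beta: "v k (\<beta> b x) = b (v k x)" if "k \<in> J" for k
      by (rule spatial_on_col_intertwines[OF assms(2,4) \<open>b \<in> A\<close> that])
    have "((\<lambda>j. u j (a (b (v j x)))) has_sum \<beta> a (\<beta> b x)) J"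
      using spatial[OF \<open>a \<in> A\<close>, of "\<beta> b x"] by (simp add: v_beta cong: has_sum_cong)
    then show "\<beta> (a \<circ> b) x = (\<beta> a \<circ> \<beta> b) x"
      unfolding comp_apply by (rule has_sum_unique[OF spatial[OF closed(3)[OF that]], unfolded comp_apply])
  qed
  ultimately show ?thesis
    using assms(3) unfolding unital_endomorphism_def by blast
qed

lemma sqrt_le_mult_sqrt_imp_le:
  assumes "sqrt L \<le> C * sqrt R" "0 \<le> L" "0 \<le> R" "0 \<le> C"
  shows "L \<le> C\<^sup>2 * R"
proof -
  have "(sqrt L)\<^sup>2 \<le> (C * sqrt R)\<^sup>2"
    using assms by (intro power_mono) auto
  then show ?thesis
    using assms by (simp add: power_mult_distrib)
qed

lemma mat_bound_col_square_sum:
  assumes col: "col_bound J v Cv" and mat: "mat_bound N a C" "C \<ge> 0"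
  shows "i < N \<Longrightarrow> (\<lambda>k. (norm (\<Sum>j<N. a i j (v k (x j))))\<^sup>2) summable_on J"
    and "(\<Sum>i<N. \<Sum>\<^sub>\<infinity>k\<in>J. (norm (\<Sum>j<N. a i j (v k (x j))))\<^sup>2) \<le> (C * Cv)\<^sup>2 * (\<Sum>j<N. (norm (x j))\<^sup>2)"
proof -
  define \<eta> where "\<eta> k i = (\<Sum>j<N. a i j (v k (x j)))" for k i
  define V where "V j = (\<Sum>\<^sub>\<infinity>k\<in>J. (norm (v k (x j)))\<^sup>2)" for j
  have \<eta>_bound: "(\<Sum>i<N. (norm (\<eta> k i))\<^sup>2) \<le> C\<^sup>2 * (\<Sum>j<N. (norm (v k (x j)))\<^sup>2)" for k
    using mat unfolding mat_bound_def \<eta>_def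
    by (intro sqrt_le_mult_sqrt_imp_le) (auto intro: sum_nonneg)
  have V_has_sum: "((\<lambda>k. C\<^sup>2 * (\<Sum>j<N. (norm (v k (x j)))\<^sup>2)) has_sum C\<^sup>2 * (\<Sum>j<N. V j)) J"
    unfolding V_def
    by (intro has_sum_cmult_right has_sum_sum has_sum_infsum col_bound_square_summable(1)[OF col]) auto
  have \<eta>_summable: "(\<lambda>k. (norm (\<eta> k i))\<^sup>2) summable_on J" if "i < N" for i
  proof (rule summable_on_comparison_test)
    show "(\<lambda>k. C\<^sup>2 * (\<Sum>j<N. (norm (v k (x j)))\<^sup>2)) summable_on J"
      using V_has_sum by (rule has_sum_imp_summable)
    show "(norm (\<eta> k i))\<^sup>2 \<le> C\<^sup>2 * (\<Sum>j<N. (norm (v k (x j)))\<^sup>2)" for k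
      using that member_le_sum[of i "{..<N}" "\<lambda>i. (norm (\<eta> k i))\<^sup>2"] \<eta>_bound[of k] by simp
  qed simp
  then show "i < N \<Longrightarrow> (\<lambda>k. (norm (\<Sum>j<N. a i j (v k (x j))))\<^sup>2) summable_on J"
    by (simp add: \<eta>_def)
  have "(\<Sum>i<N. \<Sum>\<^sub>\<infinity>k\<in>J. (norm (\<eta> k i))\<^sup>2) \<le> C\<^sup>2 * (\<Sum>j<N. V j)"
  proof (rule has_sum_mono[OF _ V_has_sum])
    show "((\<lambda>k. \<Sum>i<N. (norm (\<eta> k i))\<^sup>2) has_sum (\<Sum>i<N. \<Sum>\<^sub>\<infinity>k\<in>J. (norm (\<eta> k i))\<^sup>2)) J"
      by (intro has_sum_sum has_sum_infsum \<eta>_summable) auto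
  qed (rule \<eta>_bound)
  also have "\<dots> \<le> C\<^sup>2 * (\<Sum>j<N. (Cv * norm (x j))\<^sup>2)"
    unfolding V_def by (intro mult_left_mono sum_mono col_bound_square_summable(2)[OF col]) auto
  finally show "(\<Sum>i<N. \<Sum>\<^sub>\<infinity>k\<in>J. (norm (\<Sum>j<N. a i j (v k (x j))))\<^sup>2) \<le> (C * Cv)\<^sup>2 * (\<Sum>j<N. (norm (x j))\<^sup>2)"
    by (simp add: \<eta>_def power_mult_distrib sum_distrib_left mult.assoc)
qed

text \<open>The matrix \<open>[\<beta>(a\<^sub>i\<^sub>j)]\<close> factors as \<open>(I \<otimes> u) [a\<^sub>i\<^sub>j \<otimes> I] (I \<otimes> v)\<close>.\<close>

lemma spatial_on_mat_bound_square:
  fixes u v :: "'b \<Rightarrow> 'a::chilbert_space \<Rightarrow> 'a"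
  assumes row: "row_bound J u Cu" "Cu \<ge> 0" and col: "col_bound J v Cv"
    and u_linear: "\<And>j. j \<in> J \<Longrightarrow> linear (u j)"
    and spatial: "spatial_on A J u v \<beta>"
    and entries: "\<And>i j. i < N \<Longrightarrow> j < N \<Longrightarrow> a i j \<in> A"
    and mat: "mat_bound N a C" "C \<ge> 0"
  shows "(\<Sum>i<N. (norm (\<Sum>j<N. \<beta> (a i j) (x j)))\<^sup>2) \<le> (Cu * Cv * C)\<^sup>2 * (\<Sum>j<N. (norm (x j))\<^sup>2)"
proof -
  define \<eta> where "\<eta> k i = (\<Sum>j<N. a i j (v k (x j)))" for k i
  define T where "T i = (\<Sum>\<^sub>\<infinity>k\<in>J. (norm (\<eta> k i))\<^sup>2)" for i
  have "(norm (\<Sum>j<N. \<beta> (a i j) (x j)))\<^sup>2 \<le> Cu\<^sup>2 * T i" if "i < N" for i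
  proof (rule sqrt_le_mult_sqrt_imp_le)
    have "((\<lambda>k. \<Sum>j<N. u k (a i j (v k (x j)))) has_sum (\<Sum>j<N. \<beta> (a i j) (x j))) J"
      using that by (intro has_sum_sum spatial_onD[OF spatial] entries) auto
    then have w: "((\<lambda>k. u k (\<eta> k i)) has_sum (\<Sum>j<N. \<beta> (a i j) (x j))) J"
      unfolding \<eta>_def by (simp add: linear_sum[OF u_linear] cong: has_sum_cong)
    show "sqrt ((norm (\<Sum>j<N. \<beta> (a i j) (x j)))\<^sup>2) \<le> Cu * sqrt (T i)"
      using row_bound_summable(2)[OF row mat_bound_col_square_sum(1)[OF col mat that, where x=x]]
        infsumI[OF w] by (simp add: T_def \<eta>_def)
  qed (simp_all add: T_def infsum_nonneg \<open>Cu \<ge> 0\<close>)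
  then have "(\<Sum>i<N. (norm (\<Sum>j<N. \<beta> (a i j) (x j)))\<^sup>2) \<le> Cu\<^sup>2 * (\<Sum>i<N. T i)"
    unfolding sum_distrib_left by (intro sum_mono) auto
  also have "\<dots> \<le> Cu\<^sup>2 * ((C * Cv)\<^sup>2 * (\<Sum>j<N. (norm (x j))\<^sup>2))"
    using mat_bound_col_square_sum(2)[OF col mat] unfolding T_def \<eta>_def
    by (intro mult_left_mono) simp_all
  also have "\<dots> = (Cu * Cv * C)\<^sup>2 * (\<Sum>j<N. (norm (x j))\<^sup>2)"
    by (simp add: power_mult_distrib)
  finally show ?thesis .
qed

lemma mat_bound_negative_imp_zero:
  fixes x :: "nat \<Rightarrow> 'a::real_normed_vector" and a :: "nat \<Rightarrow> nat \<Rightarrow> 'a \<Rightarrow> 'a"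
  assumes "mat_bound N a C" "C < 0" "j < N"
  shows "x j = 0"
proof -
  define S where "S = (\<Sum>j<N. (norm (x j))\<^sup>2)"
  have "sqrt (\<Sum>i<N. (norm (\<Sum>j<N. a i j (x j)))\<^sup>2) \<le> C * sqrt S"
    using assms(1) unfolding mat_bound_def S_def by blast
  moreover have "0 \<le> sqrt (\<Sum>i<N. (norm (\<Sum>j<N. a i j (x j)))\<^sup>2)"
    by (simp add: sum_nonneg)
  ultimately have "0 \<le> C * sqrt S"
    by linarith
  then have "sqrt S \<le> 0"
    using \<open>C < 0\<close> by (simp add: zero_le_mult_iff)
  moreover have "S \<ge> 0"
    by (simp add: S_def sum_nonneg)
  ultimately have "S = 0"
    by simp
  then show ?thesis
    using \<open>j < N\<close> by (simp add: S_def sum_nonneg_eq_0_iff)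
qed

lemma spatial_on_completely_bounded:
  fixes A :: "('a::chilbert_space \<Rightarrow> 'a) set"
  assumes "unital_op_algebra A" "invertible_row_with J u v" "\<beta> ` A \<subseteq> A" "spatial_on A J u v \<beta>"
  shows "completely_bounded_on A \<beta>"
proof -
  obtain K where "K \<ge> 0" "row_bound J u K" "col_bound J v K"
    by (rule invertible_row_with_bound[OF assms(2)])
  have "mat_bound N (\<lambda>i j. \<beta> (a i j)) (K * K * C)"
    if entries: "\<forall>i<N. \<forall>j<N. a i j \<in> A" and mat: "mat_bound N a C" for N a C
    unfolding mat_bound_def
  proof
    fix x :: "nat \<Rightarrow> 'a"
    show "sqrt (\<Sum>i<N. (norm (\<Sum>j<N. \<beta> (a i j) (x j)))\<^sup>2) \<le> K * K * C * sqrt (\<Sum>j<N. (norm (x j))\<^sup>2)"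
    proof (cases "C \<ge> 0")
      case True
      have u_linear: "linear (u j)" if "j \<in> J" for j
        using invertible_row_withD(1)[OF assms(2) that] by (rule bounded_clinear_linear)
      have "(\<Sum>i<N. (norm (\<Sum>j<N. \<beta> (a i j) (x j)))\<^sup>2) \<le> (K * K * C)\<^sup>2 * (\<Sum>j<N. (norm (x j))\<^sup>2)"
        using entries by (intro spatial_on_mat_bound_square[OF \<open>row_bound J u K\<close> \<open>K \<ge> 0\<close>
            \<open>col_bound J v K\<close> u_linear assms(4) _ mat True]) auto
      moreover have "0 \<le> K * K * C"
        using True \<open>K \<ge> 0\<close> by simp
      ultimately show ?thesis
        using real_sqrt_le_mono by (fastforce simp: real_sqrt_mult)
    next
      case False
      have "\<beta> (a i j) \<in> BH" if "i < N" "j < N" for i j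
        using assms(1,3) entries that unfolding unital_op_algebra_def by blast
      then have "\<beta> (a i j) (x j) = 0" if "i < N" "j < N" for i j
        using mat_bound_negative_imp_zero[OF mat _ \<open>j < N\<close>] False that
        by (simp add: BH_def bounded_clinear_def linear_simps)
      moreover have "x j = 0" if "j < N" for j
        using mat_bound_negative_imp_zero[OF mat _ that] False by simp
      ultimately show ?thesis
        by simp
    qed
  qed
  then show ?thesis
    unfolding completely_bounded_on_def by blast
qed

section \<open>Weak* continuity\<close>

lemma col_bound_adjoint:
  fixes u u' :: "'b \<Rightarrow> 'a::complex_inner \<Rightarrow> 'a"
  assumes row: "row_bound J u C" and "C \<ge> 0"
    and adjoint: "\<And>j y z. j \<in> J \<Longrightarrow> cinner y (u j z) = cinner (u' j y) z"
  shows "col_bound J u' C"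
  unfolding col_bound_def
proof (intro allI impI)
  fix y F assume F: "finite F \<and> F \<subseteq> J"
  define Q where "Q = (\<Sum>j\<in>F. (norm (u' j y))\<^sup>2)"
  have "Q \<ge> 0" unfolding Q_def by (simp add: sum_nonneg)
  have "complex_of_real Q = (\<Sum>j\<in>F. cinner (u' j y) (u' j y))"
    by (simp add: Q_def cinner_self)
  also have "\<dots> = cinner y (\<Sum>j\<in>F. u j (u' j y))"
    using F by (simp add: adjoint cinner_sum_right subset_eq)
  finally have "Q \<le> norm y * norm (\<Sum>j\<in>F. u j (u' j y))"
    using cinner_Cauchy_Schwarz \<open>Q \<ge> 0\<close> by (metis abs_of_nonneg norm_of_real)
  also have "\<dots> \<le> norm y * (C * sqrt Q)"
    unfolding Q_def using row F by (intro mult_left_mono) (auto simp: row_bound_def)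
  finally have Q_le: "sqrt Q * sqrt Q \<le> (C * norm y) * sqrt Q"
    using \<open>Q \<ge> 0\<close> by (simp add: algebra_simps)
  show "sqrt Q \<le> C * norm y"
  proof (cases "sqrt Q = 0")
    case False
    then have "sqrt Q > 0"
      using \<open>Q \<ge> 0\<close> by simp
    then show ?thesis
      by (rule mult_right_le_imp_le[OF Q_le])
  qed (simp add: \<open>C \<ge> 0\<close>)
qed

text \<open>The index pairs \<open>(k, j)\<close> are enumerated by \<open>prod_decode\<close>, turning a double series
  over \<open>k\<close> and \<open>j \<in> J\<close> into a single series.\<close>

definition stack_columns :: "nat set \<Rightarrow> (nat \<Rightarrow> 'a \<Rightarrow> 'a::zero) \<Rightarrow> (nat \<Rightarrow> 'a) \<Rightarrow> nat \<Rightarrow> 'a" where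
  "stack_columns J c z m = (case prod_decode m of (k, j) \<Rightarrow> if j \<in> J then c j (z k) else 0)"

lemma col_bound_square_summable_pairs:
  assumes col: "col_bound J c K" and z: "summable (\<lambda>k. (norm (z k))\<^sup>2)"
  shows "(\<lambda>(k, j). if j \<in> J then (norm (c j (z k)))\<^sup>2 else 0) summable_on UNIV"
proof -
  define f where "f = (\<lambda>(k, j). if j \<in> J then (norm (c j (z k)))\<^sup>2 else 0)"
  define G where "G k = (\<Sum>\<^sub>\<infinity>j\<in>J. (norm (c j (z k)))\<^sup>2)" for k
  have rows: "((\<lambda>j. f (k, j)) has_sum G k) UNIV" for k
    unfolding G_def f_def using has_sum_infsum[OF col_bound_square_summable(1)[OF col]]
    by (subst has_sum_cong_neutral[where T=J]) auto
  have "G summable_on UNIV"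
  proof (rule summable_on_comparison_test)
    show "(\<lambda>k. K\<^sup>2 * (norm (z k))\<^sup>2) summable_on UNIV"
      by (intro summable_on_cmult_right summable_nonneg_imp_summable_on z) auto
    show "G k \<le> K\<^sup>2 * (norm (z k))\<^sup>2" for k
      using col_bound_square_summable(2)[OF col, of "z k"] by (simp add: G_def power_mult_distrib)
  qed (simp add: G_def infsum_nonneg)
  then have "f summable_on UNIV \<times> UNIV"
    by (rule summable_on_SigmaI[OF rows]) (simp add: f_def split: prod.splits)
  then show ?thesis
    by (simp add: f_def)
qed

lemma summable_stack_columns:
  assumes "col_bound J c K" "summable (\<lambda>k. (norm (z k))\<^sup>2)"
  shows "summable (\<lambda>m. (norm (stack_columns J c z m))\<^sup>2)"
proof -
  let ?g = "\<lambda>(k, j). if j \<in> J then (norm (c j (z k)))\<^sup>2 else (0::real)"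
  have "(?g \<circ> prod_decode) summable_on UNIV"
    using col_bound_square_summable_pairs[OF assms] summable_on_reindex[of prod_decode UNIV ?g]
      bij_prod_decode by (simp add: bij_def)
  moreover have "?g \<circ> prod_decode = (\<lambda>m. (norm (stack_columns J c z m))\<^sup>2)"
    by (auto simp: fun_eq_iff stack_columns_def split: prod.splits)
  ultimately show ?thesis
    by (subst summable_on_UNIV_nonneg_real_iff[symmetric]) auto
qed

lemma cmod_cinner_le_squares:
  assumes "bounded_linear a"
  shows "cmod (cinner p (a q)) \<le> onorm a * ((norm p)\<^sup>2 + (norm q)\<^sup>2)"
proof -
  have "cmod (cinner p (a q)) \<le> norm p * (onorm a * norm q)"
    using cinner_Cauchy_Schwarz[of p "a q"] onorm[OF assms, of q]
    by (meson mult_left_mono norm_ge_zero order_trans)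
  also have "\<dots> = onorm a * (norm p * norm q)"
    by (simp add: ac_simps)
  also have "\<dots> \<le> onorm a * ((norm p)\<^sup>2 + (norm q)\<^sup>2)"
    using onorm_pos_le[OF assms] sum_squares_bound[of "norm p" "norm q"]
      mult_nonneg_nonneg[OF norm_ge_zero norm_ge_zero, of p q]
    by (intro mult_left_mono) linarith+
  finally show ?thesis .
qed

text \<open>Both sides equal the double series \<open>\<Sum>\<^sub>k \<Sum>\<^sub>j \<langle>u\<^sub>j\<^sup>* y\<^sub>k, a v\<^sub>j x\<^sub>k\<rangle>\<close>, which converges
  absolutely and can therefore be summed along \<open>prod_decode\<close>.\<close>

lemma series_spatial_expansion:
  fixes a b :: "'a::chilbert_space \<Rightarrow> 'a" and J :: "nat set"
  assumes a: "bounded_linear a"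
    and expansion: "\<And>x. ((\<lambda>j. u j (a (v j x))) has_sum b x) J"
    and adjoint: "\<And>j y z. j \<in> J \<Longrightarrow> cinner y (u j z) = cinner (u' j y) z"
    and col_v: "col_bound J v K" and col_u': "col_bound J u' K"
    and x: "summable (\<lambda>k. (norm (x k))\<^sup>2)" and y: "summable (\<lambda>k. (norm (y k))\<^sup>2)"
  shows "(\<Sum>k. cinner (y k) (b (x k)))
      = (\<Sum>m. cinner (stack_columns J u' y m) (a (stack_columns J v x m)))"
proof -
  define h where "h = (\<lambda>(k, j). if j \<in> J then cinner (u' j (y k)) (a (v j (x k))) else 0)"
  have "(\<lambda>p. norm (h p)) summable_on UNIV"
  proof (rule summable_on_comparison_test)
    show "(\<lambda>(k, j). onorm a * ((if j \<in> J then (norm (u' j (y k)))\<^sup>2 else 0)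
        + (if j \<in> J then (norm (v j (x k)))\<^sup>2 else 0))) summable_on UNIV"
      using summable_on_cmult_right[OF summable_on_add[OF
          col_bound_square_summable_pairs[OF col_u' y] col_bound_square_summable_pairs[OF col_v x]]]
      by (simp add: case_prod_unfold)
    show "norm (h p) \<le> (\<lambda>(k, j). onorm a * ((if j \<in> J then (norm (u' j (y k)))\<^sup>2 else 0)
        + (if j \<in> J then (norm (v j (x k)))\<^sup>2 else 0))) p" for p
      using onorm_pos_le[OF a] cmod_cinner_le_squares[OF a] by (auto simp: h_def split: prod.splits)
  qed simp
  then have h_sum: "(h has_sum infsum h UNIV) UNIV"
    by (rule has_sum_infsum[OF abs_summable_summable])
  have "h \<circ> prod_decode = (\<lambda>m. cinner (stack_columns J u' y m) (a (stack_columns J v x m)))"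
    using linear_0[OF bounded_linear.linear[OF a]]
    by (auto simp: fun_eq_iff h_def stack_columns_def split: prod.splits)
  then have rhs: "(\<lambda>m. cinner (stack_columns J u' y m) (a (stack_columns J v x m))) sums infsum h UNIV"
    using has_sum_prod_decode_sums[OF h_sum] by simp
  have rows: "((\<lambda>j. h (k, j)) has_sum cinner (y k) (b (x k))) UNIV" for k
  proof -
    have "((\<lambda>j. cinner (y k) (u j (a (v j (x k))))) has_sum cinner (y k) (b (x k))) J"
      by (rule has_sum_bounded_linear[OF bounded_linear_cinner_right expansion])
    then show ?thesis
      by (subst has_sum_cong_neutral[where T=J]) (auto simp: h_def adjoint)
  qed
  have "(\<lambda>k. cinner (y k) (b (x k))) sums infsum h UNIV"
    using has_sum_SigmaD[where A=UNIV and B="\<lambda>_. UNIV", OF _ rows] h_sum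
    by (simp add: has_sum_imp_sums)
  with rhs show ?thesis
    by (simp add: sums_iff)
qed

lemma spatial_on_normal_pullback:
  fixes A :: "('a::chilbert_space \<Rightarrow> 'a) set" and J :: "nat set"
  assumes "A \<subseteq> BH" "invertible_row_with J u v" "spatial_on A J u v \<beta>"
    and "\<omega> \<in> normal_functionals"
  shows "\<exists>\<omega>'\<in>normal_functionals. \<forall>a\<in>A. \<omega> (\<beta> a) = \<omega>' a"
proof -
  obtain x y where \<omega>: "\<omega> = (\<lambda>T. \<Sum>k. cinner (y k) (T (x k)))"
    and x: "summable (\<lambda>k. (norm (x k))\<^sup>2)" and y: "summable (\<lambda>k. (norm (y k))\<^sup>2)"
    using \<open>\<omega> \<in> normal_functionals\<close> unfolding normal_functionals_def by blast
  obtain K where "K \<ge> 0" "row_bound J u K" "col_bound J v K"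
    by (rule invertible_row_with_bound[OF assms(2)])
  obtain u' where adjoint: "\<And>j y z. j \<in> J \<Longrightarrow> cinner y (u j z) = cinner (u' j y) z"
    using bounded_clinear_adjoint_exists[OF invertible_row_withD(1)[OF assms(2)]] by metis
  have "col_bound J u' K"
    by (rule col_bound_adjoint[OF \<open>row_bound J u K\<close> \<open>K \<ge> 0\<close> adjoint])
  define \<omega>' where "\<omega>' = (\<lambda>T. \<Sum>m. cinner (stack_columns J u' y m) (T (stack_columns J v x m)))"
  have "\<omega>' \<in> normal_functionals"
    unfolding normal_functionals_def \<omega>'_def
    using summable_stack_columns[OF \<open>col_bound J v K\<close> x] summable_stack_columns[OF \<open>col_bound J u' K\<close> y]
    by blast
  moreover have "\<omega> (\<beta> a) = \<omega>' a" if "a \<in> A" for a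
    unfolding \<omega> \<omega>'_def
  proof (rule series_spatial_expansion[OF _ spatial_onD[OF assms(3) that] adjoint
        \<open>col_bound J v K\<close> \<open>col_bound J u' K\<close> x y])
    show "bounded_linear a"
      using assms(1) that by (auto simp: BH_def bounded_clinear_def)
  qed
  ultimately show ?thesis
    by blast
qed

lemma wstar_continuous_on_if_normal_pullback:
  assumes "A \<subseteq> BH" "\<beta> ` A \<subseteq> A"
    and pullback: "\<And>\<omega>. \<omega> \<in> normal_functionals \<Longrightarrow> \<exists>\<omega>'\<in>normal_functionals. \<forall>a\<in>A. \<omega> (\<beta> a) = \<omega>' a"
  shows "wstar_continuous_on A \<beta>"
proof -
  define S :: "('a \<Rightarrow> 'a) set set" where
    "S = {{T. \<omega> T \<in> U} | \<omega> U. \<omega> \<in> normal_functionals \<and> open U}"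
  define G where "G = topology_generated_by S"
  have "(\<lambda>T. \<Sum>k. cinner 0 (T 0)) \<in> normal_functionals"
    unfolding normal_functionals_def by (rule CollectI, rule exI[of _ "\<lambda>_. 0"], rule exI[of _ "\<lambda>_. 0"]) simp
  then have "UNIV \<in> S"
    unfolding S_def by blast
  then have "topspace G = UNIV"
    unfolding G_def by auto
  have X: "subtopology wstar_topology A = subtopology G A"
    unfolding wstar_topology_def G_def S_def subtopology_subtopology using assms(1)
    by (simp add: Int_absorb1)
  have "continuous_map (subtopology G A) G \<beta>"
  proof (rule continuous_on_generated_topo[of S _ \<beta>, folded G_def])
    fix U assume "U \<in> S"
    then obtain \<omega> V where U: "U = {T. \<omega> T \<in> V}" and "\<omega> \<in> normal_functionals" "open V"
      unfolding S_def by blast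
    then obtain \<omega>' where "\<omega>' \<in> normal_functionals" and \<omega>': "\<And>a. a \<in> A \<Longrightarrow> \<omega> (\<beta> a) = \<omega>' a"
      using pullback by blast
    have "\<beta> -` U \<inter> topspace (subtopology G A) = {T. \<omega>' T \<in> V} \<inter> A"
      using \<open>topspace G = UNIV\<close> \<omega>' by (auto simp: U)
    moreover have "openin G {T. \<omega>' T \<in> V}"
      unfolding G_def S_def
      by (rule topology_generated_by_Basis) (use \<open>\<omega>' \<in> normal_functionals\<close> \<open>open V\<close> in blast)
    ultimately show "openin (subtopology G A) (\<beta> -` U \<inter> topspace (subtopology G A))"
      unfolding openin_subtopology by blast
  qed (use \<open>UNIV \<in> S\<close> in blast)
  then show ?thesis
    unfolding wstar_continuous_on_def X continuous_map_in_subtopology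
    using assms(2) \<open>topspace G = UNIV\<close> by auto
qed

lemma spatial_on_wstar_continuous:
  fixes A :: "('a::chilbert_space \<Rightarrow> 'a) set" and J :: "nat set"
  assumes "unital_op_algebra A" "invertible_row_with J u v" "\<beta> ` A \<subseteq> A" "spatial_on A J u v \<beta>"
  shows "wstar_continuous_on A \<beta>"
proof -
  have "A \<subseteq> BH"
    using assms(1) by (simp add: unital_op_algebra_def)
  then show ?thesis
    using spatial_on_normal_pullback[OF _ assms(2,4)] assms(3)
    by (intro wstar_continuous_on_if_normal_pullback) blast+
qed

section \<open>Words\<close>

lemma spatial_on_onorm_le:
  fixes A :: "('a::chilbert_space \<Rightarrow> 'a) set"
  assumes "spatial_on A J u v \<beta>" "row_bound J u Cu" "Cu \<ge> 0" "col_bound J v Cv" "Cv \<ge> 0"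
    and "A \<subseteq> BH" "a \<in> A"
  shows "onorm (\<beta> a) \<le> Cu * Cv * onorm a"
proof -
  have a: "bounded_linear a"
    using assms(6,7) by (auto simp: BH_def bounded_clinear_def)
  have "norm (\<beta> a x) \<le> Cu * Cv * onorm a * norm x" for x
    using row_col_composition_bound(2)[OF assms(2-4) a, of x] infsumI[OF spatial_onD[OF assms(1,7)]]
    by simp
  moreover have "0 \<le> Cu * Cv * onorm a"
    using assms(3,5) onorm_pos_le[OF a] by simp
  ultimately show ?thesis
    by (intro onorm_bound)
qed

lemma word_idx_Nil: "word_idx n [] = {[]}"
  by (auto simp: word_idx_def)

lemma Cons_in_word_idx_iff: "j # J \<in> word_idx n (i # \<mu>) \<longleftrightarrow> j \<in> row_idx n i \<and> J \<in> word_idx n \<mu>"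
  by (auto simp: word_idx_def row_idx_def All_less_Suc2)

lemma word_idx_Cons: "word_idx n (i # \<mu>) = (\<lambda>(j, J). j # J) ` (row_idx n i \<times> word_idx n \<mu>)"
proof -
  have "K \<in> (\<lambda>(j, J). j # J) ` (row_idx n i \<times> word_idx n \<mu>)" if "K \<in> word_idx n (i # \<mu>)" for K
    using that Cons_in_word_idx_iff by (cases K) (auto simp: word_idx_def)
  then show ?thesis
    using Cons_in_word_idx_iff by fastforce
qed

lemma spatial_on_word_Cons:
  fixes A :: "('a::chilbert_space \<Rightarrow> 'a) set"
  assumes "A \<subseteq> BH"
    and letter: "spatial_on A (row_idx n i) (u i) (v i) \<gamma>"
    and u: "\<And>j. j \<in> row_idx n i \<Longrightarrow> bounded_linear (u i j)"
    and word: "spatial_on A (word_idx n \<mu>) (hat_u u \<mu>) (hat_v v \<mu>) \<beta>" "\<beta> ` A \<subseteq> A"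
    and "row_bound (word_idx n (i # \<mu>)) (hat_u u (i # \<mu>)) C" "C \<ge> 0"
      "col_bound (word_idx n (i # \<mu>)) (hat_v v (i # \<mu>)) C"
  shows "spatial_on A (word_idx n (i # \<mu>)) (hat_u u (i # \<mu>)) (hat_v v (i # \<mu>)) (\<gamma> \<circ> \<beta>)"
  unfolding spatial_on_def
proof (intro ballI allI)
  fix a x assume "a \<in> A"
  let ?G = "\<lambda>J. hat_u u (i # \<mu>) J (a (hat_v v (i # \<mu>) J x))"
  have "bounded_linear a"
    using \<open>A \<subseteq> BH\<close> \<open>a \<in> A\<close> by (auto simp: BH_def bounded_clinear_def)
  then have "?G summable_on word_idx n (i # \<mu>)"
    by (rule row_col_composition_bound(1)[OF assms(6-8)])
  then obtain S where S: "(?G has_sum S) (word_idx n (i # \<mu>))"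
    by (auto simp: summable_on_def)
  moreover have "inj_on (\<lambda>(j, J). j # J) (row_idx n i \<times> word_idx n \<mu>)"
    by (auto simp: inj_on_def)
  ultimately have "((?G \<circ> (\<lambda>(j, J). j # J)) has_sum S) (row_idx n i \<times> word_idx n \<mu>)"
    unfolding word_idx_Cons by (simp only: has_sum_reindex)
  then have pairs: "((\<lambda>(j, J). u i j (hat_u u \<mu> J (a (hat_v v \<mu> J (v i j x))))) has_sum S)
      (row_idx n i \<times> word_idx n \<mu>)"
    by (simp add: case_prod_unfold o_def)
  have rows: "((\<lambda>J. u i j (hat_u u \<mu> J (a (hat_v v \<mu> J (v i j x))))) has_sum u i j (\<beta> a (v i j x)))
      (word_idx n \<mu>)" if "j \<in> row_idx n i" for j
    by (rule has_sum_bounded_linear[OF u[OF that] spatial_onD[OF word(1) \<open>a \<in> A\<close>]])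
  have "((\<lambda>j. u i j (\<beta> a (v i j x))) has_sum S) (row_idx n i)"
    by (rule has_sum_SigmaD[OF pairs]) (simp add: rows)
  moreover have "((\<lambda>j. u i j (\<beta> a (v i j x))) has_sum \<gamma> (\<beta> a) x) (row_idx n i)"
    using word(2) \<open>a \<in> A\<close> by (intro spatial_onD[OF letter]) blast
  ultimately have "S = \<gamma> (\<beta> a) x"
    by (rule has_sum_unique)
  then show "(?G has_sum (\<gamma> \<circ> \<beta>) a x) (word_idx n (i # \<mu>))"
    using S by simp
qed

lemma spatial_on_alpha_word:
  fixes A :: "('a::chilbert_space \<Rightarrow> 'a) set"
  assumes "A \<subseteq> BH"
    and letter: "\<And>i. i \<in> L \<Longrightarrow> \<alpha> i ` A \<subseteq> A \<and> spatial_on A (row_idx n i) (u i) (v i) (\<alpha> i)"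
    and u: "\<And>i j. i \<in> L \<Longrightarrow> j \<in> row_idx n i \<Longrightarrow> bounded_linear (u i j)"
    and words: "\<And>\<mu>. set \<mu> \<subseteq> L \<Longrightarrow>
      row_bound (word_idx n \<mu>) (hat_u u \<mu>) C \<and> col_bound (word_idx n \<mu>) (hat_v v \<mu>) C"
    and "C \<ge> 0"
  shows "set \<mu> \<subseteq> L \<Longrightarrow>
    alpha_word \<alpha> \<mu> ` A \<subseteq> A \<and> spatial_on A (word_idx n \<mu>) (hat_u u \<mu>) (hat_v v \<mu>) (alpha_word \<alpha> \<mu>)"
proof (induction \<mu>)
  case Nil
  then show ?case
    by (simp add: spatial_on_def word_idx_Nil has_sum_finiteI)
next
  case (Cons i \<mu>)
  then have "i \<in> L" "set \<mu> \<subseteq> L" by auto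
  with Cons.IH have IH: "alpha_word \<alpha> \<mu> ` A \<subseteq> A"
      "spatial_on A (word_idx n \<mu>) (hat_u u \<mu>) (hat_v v \<mu>) (alpha_word \<alpha> \<mu>)"
    by auto
  have "spatial_on A (word_idx n (i # \<mu>)) (hat_u u (i # \<mu>)) (hat_v v (i # \<mu>)) (\<alpha> i \<circ> alpha_word \<alpha> \<mu>)"
    using words[OF Cons.prems] letter[OF \<open>i \<in> L\<close>] u[OF \<open>i \<in> L\<close>]
    by (intro spatial_on_word_Cons[OF \<open>A \<subseteq> BH\<close> _ _ IH(2,1) _ \<open>C \<ge> 0\<close>]) auto
  moreover have "alpha_word \<alpha> (i # \<mu>) ` A \<subseteq> A"
    using letter[OF \<open>i \<in> L\<close>] IH(1) by (auto simp: image_subset_iff)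
  ultimately show ?case
    unfolding alpha_word.simps by blast
qed

lemma uniformly_bounded_nonneg_bound:
  assumes "uniformly_bounded d n u v"
  shows "\<exists>C\<ge>0. \<forall>\<mu>. set \<mu> \<subseteq> letters d \<longrightarrow>
      row_bound (word_idx n \<mu>) (hat_u u \<mu>) C \<and> col_bound (word_idx n \<mu>) (hat_v v \<mu>) C"
proof -
  obtain C where C: "\<And>\<mu>. set \<mu> \<subseteq> letters d \<Longrightarrow>
      row_bound (word_idx n \<mu>) (hat_u u \<mu>) C \<and> col_bound (word_idx n \<mu>) (hat_v v \<mu>) C"
    using assms unfolding uniformly_bounded_def by blast
  show ?thesis
  proof (intro exI[of _ "max C 0"] conjI allI impI)
    fix \<mu> assume "set \<mu> \<subseteq> letters d"
    then show "row_bound (word_idx n \<mu>) (hat_u u \<mu>) (max C 0)" "col_bound (word_idx n \<mu>) (hat_v v \<mu>) (max C 0)"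
      using C row_bound_mono col_bound_mono max.cobounded1 by blast+
  qed simp
qed

theorem proposition3p4:
  fixes A :: "('a::chilbert_space \<Rightarrow> 'a) set"
    and d :: enat and n :: "nat \<Rightarrow> enat"
    and u v :: "nat \<Rightarrow> nat \<Rightarrow> 'a \<Rightarrow> 'a"
    and \<alpha> :: "nat \<Rightarrow> ('a \<Rightarrow> 'a) \<Rightarrow> ('a \<Rightarrow> 'a)"
  assumes "d \<ge> 1"
    and "unital_op_algebra A"
    and "wstar_closed A"
    and "ub_spatial_action A d n u v \<alpha>"
  shows "unital_wstar_dynamical_system A d \<alpha>"
proof -
  have "A \<subseteq> BH"
    using assms(2) by (simp add: unital_op_algebra_def)
  have row: "\<And>i. i \<in> letters d \<Longrightarrow> invertible_row_with (row_idx n i) (u i) (v i)"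
    and letter: "\<And>i. i \<in> letters d \<Longrightarrow> \<alpha> i ` A \<subseteq> A \<and> spatial_on A (row_idx n i) (u i) (v i) (\<alpha> i)"
    using assms(4) unfolding ub_spatial_action_def uniformly_bounded_def spatial_on_def by blast+
  have "uniformly_bounded d n u v"
    using assms(4) by (simp add: ub_spatial_action_def)
  from uniformly_bounded_nonneg_bound[OF this] obtain C where "C \<ge> 0"
    and words: "\<And>\<mu>. set \<mu> \<subseteq> letters d \<Longrightarrow>
      row_bound (word_idx n \<mu>) (hat_u u \<mu>) C \<and> col_bound (word_idx n \<mu>) (hat_v v \<mu>) C"
    by blast
  have "unital_endomorphism A (\<alpha> i) \<and> wstar_continuous_on A (\<alpha> i) \<and> completely_bounded_on A (\<alpha> i)"
    if "i \<in> letters d" for i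
    using letter[OF that]
    by (intro conjI spatial_on_unital_endomorphism[OF assms(2) row[OF that]]
        spatial_on_wstar_continuous[OF assms(2) row[OF that]]
        spatial_on_completely_bounded[OF assms(2) row[OF that]]) auto
  moreover have "onorm (alpha_word \<alpha> \<mu> a) \<le> C * C * onorm a" if "set \<mu> \<subseteq> letters d" "a \<in> A" for \<mu> a
  proof (rule spatial_on_onorm_le[OF _ _ \<open>C \<ge> 0\<close> _ \<open>C \<ge> 0\<close> \<open>A \<subseteq> BH\<close> \<open>a \<in> A\<close>])
    have "\<And>i j. i \<in> letters d \<Longrightarrow> j \<in> row_idx n i \<Longrightarrow> bounded_linear (u i j)"
      using invertible_row_withD(1)[OF row] by (simp add: bounded_clinear_def)
    from spatial_on_alpha_word[OF \<open>A \<subseteq> BH\<close> letter this words \<open>C \<ge> 0\<close> that(1)]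
    show "spatial_on A (word_idx n \<mu>) (hat_u u \<mu>) (hat_v v \<mu>) (alpha_word \<alpha> \<mu>)"
      by blast
  qed (use words[OF that(1)] in blast)+
  ultimately show ?thesis
    unfolding unital_wstar_dynamical_system_def by blast
qed

end
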